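(* Suppose $k_n\sim n^a$ for some $0<a<1$, and that for some $0\le\delta<1-a$ there exist $\theta_{0n}=(\theta_{10n},\dots,\theta_{K(n)0n})$ with $\|f_{\theta_{0n}}-f_0\|_2=o(n^{-\delta})$ (A1) and $\sum_{i=1}^{K(n)}\theta_{i0n}^2=o(n^{1-\delta})$ (A2). With $\omega_n=(\theta_n,\sigma^2)$ and $\kappa>0$, let $$N_{\kappa/n^\delta}=\Big\{\omega_n:\tfrac12\log\tfrac{\sigma^2}{\sigma_0^2}-\tfrac12\Big(1-\tfrac{\sigma_0^2}{\sigma^2}\Big)+\tfrac1{2\sigma^2}\int(f_{\theta_n}(\mathbf x)-f_0(\mathbf x))^2d\mathbf x<\kappa/n^\delta\Big\}.$$ Then for every $\kappa>0$ and $\tilde\kappa>0$, with prior $p(\omega_n)=\frac{\lambda^\alpha}{\Gamma(\alpha)}(\sigma^{-2})^{\alpha+1}e^{-\lambda/\sigma^2}\prod_{i=1}^{K(n)}(2\pi\zeta^2)^{-1/2}e^{-\theta_{in}^2/(2\zeta^2)}$, we have $\int_{N_{\kappa/n^\delta}}p(\omega_n)d\omega_n\ge e^{-\tilde\kappa n^{1-\delta}}$ for all sufficiently large $n$.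
   Context: $f_0$ is square integrable on $[0,1]^p$ ($p$ fixed), $\sigma_0>0$, and $\|\cdot\|_2$ is the $L_2([0,1]^p)$ norm. $\psi(u)=1/(1+e^{-u})$, $f_{\theta_n}(\mathbf x)=\beta_0+\sum_{j=1}^{k_n}\beta_j\psi(\gamma_{j0}+\sum_{h=1}^p\gamma_{jh}x_h)$, $\theta_n=(\theta_{1n},\dots,\theta_{K(n)n})$ the vector of all network parameters, $K(n)$ its length. $\alpha,\lambda,\zeta>0$ are fixed. The expression defining $N_{\kappa/n^\delta}$ is the KL divergence between the Gaussian regression densities with $(f_0,\sigma_0^2)$ and $(f_{\theta_n},\sigma^2)$ for $\mathbf x\sim\mathrm{Uniform}[0,1]^p$. *)

theory Defs
  imports "HOL-Probability.Probability" "HOL-Library.Landau_Symbols"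
begin

definition psi :: "real \<Rightarrow> real" where
  "psi u = 1 / (1 + exp (- u))"

text \<open>Number of parameters of a single-hidden-layer network with input dimension p
  and k hidden nodes: beta_0, beta_1..beta_k, and gamma_{j0..jp} for j = 1..k.\<close>
definition nparams :: "nat \<Rightarrow> nat \<Rightarrow> nat" where
  "nparams p k = 1 + k + k * (p + 1)"

text \<open>Parameter layout in theta :: nat => real (indices 0 ..< nparams p k):
  beta_0 = theta 0, beta_j = theta j (1 <= j <= k),
  gamma_{jh} = theta (k + 1 + (j - 1) * (p + 1) + h)  (1 <= j <= k, 0 <= h <= p).
  Inputs x :: nat => real use coordinates x_1..x_p stored at x 0 .. x (p-1).\<close>
definition gamma_idx :: "nat \<Rightarrow> nat \<Rightarrow> nat \<Rightarrow> nat \<Rightarrow> nat" where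
  "gamma_idx p k j h = k + 1 + (j - 1) * (p + 1) + h"

definition fnet :: "nat \<Rightarrow> nat \<Rightarrow> (nat \<Rightarrow> real) \<Rightarrow> (nat \<Rightarrow> real) \<Rightarrow> real" where
  "fnet p k theta x =
     theta 0 + (\<Sum>j = 1..k. theta j *
        psi (theta (gamma_idx p k j 0) + (\<Sum>h = 1..p. theta (gamma_idx p k j h) * x (h - 1))))"

definition cube :: "nat \<Rightarrow> (nat \<Rightarrow> real) measure" where
  "cube p = PiM {..<p} (\<lambda>_. restrict_space lborel {0..1})"

definition L2norm :: "nat \<Rightarrow> ((nat \<Rightarrow> real) \<Rightarrow> real) \<Rightarrow> real" where
  "L2norm p g = sqrt (\<integral>x. (g x)\<^sup>2 \<partial>cube p)"

text \<open>Parameter space: omega = (theta, sigma^2) with Lebesgue measure on R^K \<times> R.\<close>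
definition param_space :: "nat \<Rightarrow> ((nat \<Rightarrow> real) \<times> real) measure" where
  "param_space K = PiM {..<K} (\<lambda>_. lborel) \<Otimes>\<^sub>M lborel"

definition prior_dens ::
  "real \<Rightarrow> real \<Rightarrow> real \<Rightarrow> nat \<Rightarrow> (nat \<Rightarrow> real) \<times> real \<Rightarrow> real" where
  "prior_dens \<alpha> lam \<zeta> K \<omega> =
     (let theta = fst \<omega>; s = snd \<omega> in
      if s > 0 then
        (lam powr \<alpha> / Gamma \<alpha>) * (1 / s) powr (\<alpha> + 1) * exp (- lam / s) *
        (\<Prod>i<K. (2 * pi * \<zeta>\<^sup>2) powr (- 1 / 2) * exp (- (theta i)\<^sup>2 / (2 * \<zeta>\<^sup>2)))
      else 0)"

text \<open>KL divergence between N(f0, sigma0^2) and N(f_theta, sigma^2) regression densities,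
  x uniform on [0,1]^p.\<close>
definition KL_div ::
  "nat \<Rightarrow> nat \<Rightarrow> ((nat \<Rightarrow> real) \<Rightarrow> real) \<Rightarrow> real \<Rightarrow> (nat \<Rightarrow> real) \<times> real \<Rightarrow> real" where
  "KL_div p k f0 \<sigma>0 \<omega> =
     (let theta = fst \<omega>; s = snd \<omega> in
      1/2 * ln (s / \<sigma>0\<^sup>2) - 1/2 * (1 - \<sigma>0\<^sup>2 / s)
      + 1 / (2 * s) * (\<integral>x. (fnet p k theta x - f0 x)\<^sup>2 \<partial>cube p))"

definition KL_nbhd ::
  "nat \<Rightarrow> nat \<Rightarrow> ((nat \<Rightarrow> real) \<Rightarrow> real) \<Rightarrow> real \<Rightarrow> real \<Rightarrow> ((nat \<Rightarrow> real) \<times> real) set" where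
  "KL_nbhd p k f0 \<sigma>0 \<epsilon> = {\<omega>. snd \<omega> > 0 \<and> KL_div p k f0 \<sigma>0 \<omega> < \<epsilon>}"

end

theory Submission
  imports Defs "HOL-Real_Asymp.Real_Asymp"
begin

(* Consider the box of parameters whose network weights lie within n^-2 of theta_0n and whose
   variance satisfies sigma_0^2 <= sigma^2 <= sigma_0^2 (1 + c n^-delta).  Since the logistic
   function is 1-Lipschitz, on the box the network moves by at most n^-2 times a constant
   of order k_n + |theta_0n|^2 = O(n), so together with (A1) the misfit term of the KL
   divergence is o(n^-delta), while the variance term is at most (sigma^2/sigma_0^2 - 1)^2.
   Hence the box lies in the KL neighbourhood.  On the box the prior density is at least
   C b^K exp(-|theta_0n|^2 / zeta^2) for constants C, b > 0, where K is the number of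
   parameters, and the box has volume (2 n^-2)^K sigma_0^2 c n^-delta.
   With K = O(n^a), the logarithm of this mass is O(n^a log n) + o(n^(1-delta)) by (A2),
   which is o(n^(1-delta)) because a < 1 - delta. *)

lemma abs_psi_le_one: "\<bar>psi u\<bar> \<le> 1"
  unfolding psi_def by (simp add: add_pos_pos)

lemma psi_has_real_derivative:
  "(psi has_real_derivative exp (- u) / (1 + exp (- u))\<^sup>2) (at u)"
proof -
  have "0 < 1 + exp (- u)"
    by (simp add: add_pos_pos)
  then show ?thesis
    unfolding psi_def[abs_def]
    by (auto intro!: derivative_eq_intros simp: power2_eq_square)
qed

lemma psi_lipschitz: "\<bar>psi u - psi v\<bar> \<le> \<bar>u - v\<bar>"
proof -
  have "exp (- w) / (1 + exp (- w))\<^sup>2 \<le> 1" for w :: real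
    by (simp add: power2_eq_square algebra_simps add_pos_pos)
  then have "norm (psi u - psi v) \<le> 1 * norm (u - v)"
    by (intro field_differentiable_bound[of UNIV _ "\<lambda>w. exp (- w) / (1 + exp (- w))\<^sup>2"]
        has_field_derivative_at_within[OF psi_has_real_derivative]) auto
  then show ?thesis by simp
qed

lemma borel_measurable_psi [measurable]: "psi \<in> borel_measurable borel"
  using psi_has_real_derivative
  by (intro borel_measurable_continuous_onI DERIV_continuous_on) blast

definition hidden_input :: "nat \<Rightarrow> nat \<Rightarrow> (nat \<Rightarrow> real) \<Rightarrow> (nat \<Rightarrow> real) \<Rightarrow> nat \<Rightarrow> real" where
  "hidden_input p k \<theta> x j =
     \<theta> (gamma_idx p k j 0) + (\<Sum>h = 1..p. \<theta> (gamma_idx p k j h) * x (h - 1))"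

lemma fnet_eq_hidden_input:
  "fnet p k \<theta> x = \<theta> 0 + (\<Sum>j = 1..k. \<theta> j * psi (hidden_input p k \<theta> x j))"
  unfolding fnet_def hidden_input_def ..

lemma gamma_idx_less_nparams:
  assumes "1 \<le> j" "j \<le> k" "h \<le> p"
  shows "gamma_idx p k j h < nparams p k"
proof -
  have "(j - 1) * (p + 1) + h < j * (p + 1)"
    using assms by (cases j) auto
  also have "\<dots> \<le> k * (p + 1)"
    using assms(2) by (rule mult_right_mono) simp
  finally show ?thesis
    unfolding gamma_idx_def nparams_def by simp
qed

lemma less_nparams: "j \<le> k \<Longrightarrow> j < nparams p k"
  unfolding nparams_def by simp

lemma abs_fnet_le: "\<bar>fnet p k \<theta> x\<bar> \<le> \<bar>\<theta> 0\<bar> + (\<Sum>j = 1..k. \<bar>\<theta> j\<bar>)"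
proof -
  have "\<bar>fnet p k \<theta> x\<bar> \<le> \<bar>\<theta> 0\<bar> + (\<Sum>j = 1..k. \<bar>\<theta> j\<bar> * \<bar>psi (hidden_input p k \<theta> x j)\<bar>)"
    unfolding fnet_eq_hidden_input
    by (rule order_trans[OF abs_triangle_ineq add_left_mono[OF order_trans[OF sum_abs]]])
       (simp add: abs_mult)
  also have "\<dots> \<le> \<bar>\<theta> 0\<bar> + (\<Sum>j = 1..k. \<bar>\<theta> j\<bar> * 1)"
    by (intro add_left_mono sum_mono mult_left_mono abs_psi_le_one) simp
  finally show ?thesis by simp
qed

lemma hidden_input_perturb:
  assumes j: "1 \<le> j" "j \<le> k"
    and close: "\<And>i. i < nparams p k \<Longrightarrow> \<bar>\<theta> i - \<theta>' i\<bar> \<le> \<eta>"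
    and x: "\<And>h. h < p \<Longrightarrow> \<bar>x h\<bar> \<le> 1"
  shows "\<bar>hidden_input p k \<theta> x j - hidden_input p k \<theta>' x j\<bar> \<le> real (p + 1) * \<eta>"
proof -
  let ?d = "\<lambda>h. \<theta> (gamma_idx p k j h) - \<theta>' (gamma_idx p k j h)"
  have d: "\<bar>?d h\<bar> \<le> \<eta>" if "h \<le> p" for h
    using close gamma_idx_less_nparams[OF j that] by blast
  have "\<bar>hidden_input p k \<theta> x j - hidden_input p k \<theta>' x j\<bar>
      = \<bar>?d 0 + (\<Sum>h = 1..p. ?d h * x (h - 1))\<bar>"
    unfolding hidden_input_def by (simp add: algebra_simps sum_subtractf)
  also have "\<dots> \<le> \<bar>?d 0\<bar> + (\<Sum>h = 1..p. \<bar>?d h\<bar> * \<bar>x (h - 1)\<bar>)"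
    by (rule order_trans[OF abs_triangle_ineq add_left_mono[OF order_trans[OF sum_abs]]])
       (simp add: abs_mult)
  also have "\<dots> \<le> \<eta> + (\<Sum>h = 1..p. \<eta> * 1)"
    using d by (intro add_mono sum_mono mult_mono) (auto intro: x order_trans[OF abs_ge_zero])
  finally show ?thesis by (simp add: algebra_simps)
qed

definition fnet_lip :: "nat \<Rightarrow> nat \<Rightarrow> (nat \<Rightarrow> real) \<Rightarrow> real" where
  "fnet_lip p k \<theta> = 1 + real k + real (p + 1) * (\<Sum>j = 1..k. \<bar>\<theta> j\<bar>)"

lemma fnet_perturb:
  assumes close: "\<And>i. i < nparams p k \<Longrightarrow> \<bar>\<theta> i - \<theta>' i\<bar> \<le> \<eta>"
    and x: "\<And>h. h < p \<Longrightarrow> \<bar>x h\<bar> \<le> 1"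
  shows "\<bar>fnet p k \<theta> x - fnet p k \<theta>' x\<bar> \<le> \<eta> * fnet_lip p k \<theta>'"
proof -
  let ?u = "hidden_input p k \<theta> x" and ?u' = "hidden_input p k \<theta>' x"
  have \<eta>: "0 \<le> \<eta>"
    using close[of 0] by (auto simp: nparams_def)
  have unit: "\<bar>\<theta> j * psi (?u j) - \<theta>' j * psi (?u' j)\<bar> \<le> \<eta> + \<bar>\<theta>' j\<bar> * (real (p + 1) * \<eta>)"
    if j: "j \<in> {1..k}" for j
  proof -
    have "\<theta> j * psi (?u j) - \<theta>' j * psi (?u' j)
        = (\<theta> j - \<theta>' j) * psi (?u j) + \<theta>' j * (psi (?u j) - psi (?u' j))"
      by (simp add: algebra_simps)
    then have "\<bar>\<theta> j * psi (?u j) - \<theta>' j * psi (?u' j)\<bar>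
        \<le> \<bar>\<theta> j - \<theta>' j\<bar> * \<bar>psi (?u j)\<bar> + \<bar>\<theta>' j\<bar> * \<bar>psi (?u j) - psi (?u' j)\<bar>"
      by (metis abs_mult abs_triangle_ineq)
    also have "\<dots> \<le> \<eta> * 1 + \<bar>\<theta>' j\<bar> * (real (p + 1) * \<eta>)"
      using j \<eta> close[OF less_nparams] abs_psi_le_one
        order_trans[OF psi_lipschitz hidden_input_perturb[OF _ _ close x]]
      by (intro add_mono mult_mono mult_left_mono) auto
    finally show ?thesis by simp
  qed
  have "\<bar>fnet p k \<theta> x - fnet p k \<theta>' x\<bar>
      = \<bar>(\<theta> 0 - \<theta>' 0) + (\<Sum>j = 1..k. \<theta> j * psi (?u j) - \<theta>' j * psi (?u' j))\<bar>"
    unfolding fnet_eq_hidden_input by (simp add: sum_subtractf)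
  also have "\<dots> \<le> \<bar>\<theta> 0 - \<theta>' 0\<bar> + (\<Sum>j = 1..k. \<bar>\<theta> j * psi (?u j) - \<theta>' j * psi (?u' j)\<bar>)"
    by (rule order_trans[OF abs_triangle_ineq add_left_mono[OF sum_abs]])
  also have "\<dots> \<le> \<eta> + (\<Sum>j = 1..k. \<eta> + \<bar>\<theta>' j\<bar> * (real (p + 1) * \<eta>))"
    using close[of 0] unit by (intro add_mono sum_mono) (auto simp: nparams_def)
  also have "\<dots> = \<eta> * fnet_lip p k \<theta>'"
    by (simp add: fnet_lip_def sum.distrib sum_distrib_left sum_distrib_right algebra_simps)
  finally show ?thesis .
qed

lemma fnet_lip_nonneg: "0 \<le> fnet_lip p k \<theta>"
  unfolding fnet_lip_def by (simp add: sum_nonneg)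

lemma abs_le_one_plus_square: "\<bar>x\<bar> \<le> 1 + (x::real)\<^sup>2"
proof -
  have "0 \<le> (\<bar>x\<bar> - 1)\<^sup>2" by simp
  then show ?thesis
    by (simp add: power2_eq_square algebra_simps abs_mult_self_eq)
qed

lemma fnet_lip_le: "fnet_lip p k \<theta> \<le> 1 + real (p + 2) * (real k + (\<Sum>i<nparams p k. (\<theta> i)\<^sup>2))"
proof -
  have "(\<Sum>j = 1..k. \<bar>\<theta> j\<bar>) \<le> (\<Sum>j = 1..k. 1 + (\<theta> j)\<^sup>2)"
    by (intro sum_mono abs_le_one_plus_square)
  also have "\<dots> \<le> real k + (\<Sum>i<nparams p k. (\<theta> i)\<^sup>2)"
    using less_nparams[of _ k p] by (simp add: sum.distrib, intro sum_mono2) auto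
  finally have "real (p + 1) * (\<Sum>j = 1..k. \<bar>\<theta> j\<bar>)
      \<le> real (p + 1) * (real k + (\<Sum>i<nparams p k. (\<theta> i)\<^sup>2))"
    by (rule mult_left_mono) simp
  moreover have "0 \<le> (\<Sum>i<nparams p k. (\<theta> i)\<^sup>2)"
    by (simp add: sum_nonneg)
  ultimately show ?thesis
    unfolding fnet_lip_def by (simp add: algebra_simps)
qed

lemma prob_space_cube: "prob_space (cube p)"
  unfolding cube_def
  by (intro prob_space_PiM prob_spaceI) (simp add: emeasure_restrict_space)

lemma abs_le_one_of_space_cube: "x \<in> space (cube p) \<Longrightarrow> h < p \<Longrightarrow> \<bar>x h\<bar> \<le> 1"
  unfolding cube_def by (auto simp: space_PiM PiE_iff)

lemma borel_measurable_cube_component: "h < p \<Longrightarrow> (\<lambda>x. x h) \<in> borel_measurable (cube p)"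
  unfolding cube_def
  by (rule measurable_compose[OF measurable_component_singleton[of h]])
     (auto intro: measurable_restrict_space1)

lemma borel_measurable_fnet: "fnet p k \<theta> \<in> borel_measurable (cube p)"
  unfolding fnet_def[abs_def]
  by (intro borel_measurable_add borel_measurable_const borel_measurable_sum borel_measurable_times
      measurable_compose[OF _ borel_measurable_psi] borel_measurable_cube_component) auto

lemma square_add_le: "(a + b)\<^sup>2 \<le> 2 * a\<^sup>2 + 2 * (b::real)\<^sup>2"
proof -
  have "0 \<le> (a - b)\<^sup>2" by simp
  then show ?thesis by (simp add: power2_eq_square algebra_simps)
qed

lemma (in prob_space)
  fixes f g h :: "'a \<Rightarrow> real"
  assumes f: "f \<in> borel_measurable M" and g: "g \<in> borel_measurable M"
    and h: "integrable M (\<lambda>x. (h x - f x)\<^sup>2)"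
    and close: "\<And>x. x \<in> space M \<Longrightarrow> \<bar>g x - h x\<bar> \<le> B"
  shows integrable_square_diff_perturb: "integrable M (\<lambda>x. (g x - f x)\<^sup>2)"
    and integral_square_diff_perturb:
      "(\<integral>x. (g x - f x)\<^sup>2 \<partial>M) \<le> 2 * B\<^sup>2 + 2 * (\<integral>x. (h x - f x)\<^sup>2 \<partial>M)"
proof -
  have bound: "(g x - f x)\<^sup>2 \<le> 2 * B\<^sup>2 + 2 * (h x - f x)\<^sup>2" if "x \<in> space M" for x
  proof -
    have "(g x - f x)\<^sup>2 \<le> 2 * (g x - h x)\<^sup>2 + 2 * (h x - f x)\<^sup>2"
      using square_add_le[of "g x - h x" "h x - f x"] by simp
    moreover have "(g x - h x)\<^sup>2 \<le> B\<^sup>2"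
      using close[OF that] by (metis abs_ge_zero power2_abs power_mono)
    ultimately show ?thesis by simp
  qed
  have int_bound: "integrable M (\<lambda>x. 2 * B\<^sup>2 + 2 * (h x - f x)\<^sup>2)"
    using h by simp
  show int: "integrable M (\<lambda>x. (g x - f x)\<^sup>2)"
    using bound f g by (intro Bochner_Integration.integrable_bound[OF int_bound]) auto
  have "(\<integral>x. (g x - f x)\<^sup>2 \<partial>M) \<le> (\<integral>x. 2 * B\<^sup>2 + 2 * (h x - f x)\<^sup>2 \<partial>M)"
    using bound by (intro integral_mono[OF int int_bound])
  also have "\<dots> = 2 * B\<^sup>2 + 2 * (\<integral>x. (h x - f x)\<^sup>2 \<partial>M)"
    using h by (simp add: prob_space)
  finally show "(\<integral>x. (g x - f x)\<^sup>2 \<partial>M) \<le> 2 * B\<^sup>2 + 2 * (\<integral>x. (h x - f x)\<^sup>2 \<partial>M)" .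
qed

lemma integrable_fnet_minus_square:
  assumes "f0 \<in> borel_measurable (cube p)" "integrable (cube p) (\<lambda>x. (f0 x)\<^sup>2)"
  shows "integrable (cube p) (\<lambda>x. (fnet p k \<theta> x - f0 x)\<^sup>2)"
  using prob_space.integrable_square_diff_perturb[OF prob_space_cube assms(1) borel_measurable_fnet,
      where h = "\<lambda>_. 0" and B = "\<bar>\<theta> 0\<bar> + (\<Sum>j = 1..k. \<bar>\<theta> j\<bar>)"] assms(2) abs_fnet_le
  by simp

lemma ln_add_inverse_le: "1 \<le> r \<Longrightarrow> ln r - 1 + 1 / r \<le> (r - 1 :: real)\<^sup>2"
proof -
  assume r: "1 \<le> r"
  have "r - 2 + 1 / r = (r - 1)\<^sup>2 / r"
    using r by (simp add: field_simps power2_eq_square)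
  also have "\<dots> \<le> (r - 1)\<^sup>2"
    using r by (simp add: divide_le_eq mult_le_cancel_left1)
  finally show ?thesis
    using ln_le_minus_one[of r] r by simp
qed

lemma mem_KL_nbhd_of_close:
  assumes f0: "f0 \<in> borel_measurable (cube p)" "integrable (cube p) (\<lambda>x. (f0 x)\<^sup>2)"
    and \<sigma>0: "\<sigma>0 > 0" and \<epsilon>: "\<epsilon> > 0"
    and close: "\<And>i. i < nparams p k \<Longrightarrow> \<bar>\<theta> i - \<theta>' i\<bar> \<le> \<eta>"
    and s: "\<sigma>0\<^sup>2 \<le> s" "s \<le> \<sigma>0\<^sup>2 * (1 + t)" and t: "t \<le> 1" "t \<le> \<epsilon> / 2"
    and approx: "(\<integral>x. (fnet p k \<theta>' x - f0 x)\<^sup>2 \<partial>cube p) \<le> \<sigma>0\<^sup>2 * \<epsilon> / 4"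
    and lip: "(\<eta> * fnet_lip p k \<theta>')\<^sup>2 \<le> \<sigma>0\<^sup>2 * \<epsilon> / 4"
  shows "(\<theta>, s) \<in> KL_nbhd p k f0 \<sigma>0 \<epsilon>"
proof -
  define I where "I = (\<integral>x. (fnet p k \<theta> x - f0 x)\<^sup>2 \<partial>cube p)"
  have \<sigma>0_sq: "\<sigma>0\<^sup>2 > 0"
    using \<sigma>0 by simp
  then have s_pos: "s > 0"
    using s by linarith
  have "I \<le> 2 * (\<eta> * fnet_lip p k \<theta>')\<^sup>2 + 2 * (\<integral>x. (fnet p k \<theta>' x - f0 x)\<^sup>2 \<partial>cube p)"
    unfolding I_def
    using close abs_le_one_of_space_cube
    by (intro prob_space.integral_square_diff_perturb[OF prob_space_cube f0(1) borel_measurable_fnet]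
        integrable_fnet_minus_square[OF f0] fnet_perturb)
  also have "\<dots> \<le> \<sigma>0\<^sup>2 * \<epsilon>"
    using approx lip by simp
  finally have "I / (2 * s) \<le> \<sigma>0\<^sup>2 * \<epsilon> / (2 * \<sigma>0\<^sup>2)"
    using s \<sigma>0_sq \<epsilon> by (intro frac_le) auto
  then have fit: "1 / (2 * s) * I \<le> \<epsilon> / 2"
    using \<sigma>0_sq by simp
  define r where "r = s / \<sigma>0\<^sup>2"
  have r: "1 \<le> r" "r - 1 \<le> t"
    unfolding r_def using s \<sigma>0_sq by (auto simp: field_simps)
  have "(r - 1) * (r - 1) \<le> 1 * (r - 1)"
    using r t by (intro mult_right_mono) auto
  then have "ln r - 1 + 1 / r \<le> t"
    using ln_add_inverse_le[OF r(1)] r by (simp add: power2_eq_square)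
  have "1/2 * ln (s / \<sigma>0\<^sup>2) - 1/2 * (1 - \<sigma>0\<^sup>2 / s) = (ln r - 1 + 1 / r) / 2"
    unfolding r_def by (simp add: algebra_simps)
  also have "\<dots> \<le> \<epsilon> / 4"
    using \<open>ln r - 1 + 1 / r \<le> t\<close> t by simp
  finally have variance: "1/2 * ln (s / \<sigma>0\<^sup>2) - 1/2 * (1 - \<sigma>0\<^sup>2 / s) \<le> \<epsilon> / 4" .
  have "KL_div p k f0 \<sigma>0 (\<theta>, s)
      = 1/2 * ln (s / \<sigma>0\<^sup>2) - 1/2 * (1 - \<sigma>0\<^sup>2 / s) + 1 / (2 * s) * I"
    unfolding KL_div_def I_def by simp
  then have "KL_div p k f0 \<sigma>0 (\<theta>, s) < \<epsilon>"
    using fit variance \<epsilon> by linarith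
  then show ?thesis
    using s_pos unfolding KL_nbhd_def by simp
qed

definition inv_gamma_dens :: "real \<Rightarrow> real \<Rightarrow> real \<Rightarrow> real" where
  "inv_gamma_dens \<alpha> lam s = lam powr \<alpha> / Gamma \<alpha> * (1 / s) powr (\<alpha> + 1) * exp (- lam / s)"

lemma prior_dens_Pair:
  assumes "0 < s"
  shows "prior_dens \<alpha> lam \<zeta> K (\<theta>, s) = inv_gamma_dens \<alpha> lam s * (\<Prod>i<K. normal_density 0 \<zeta> (\<theta> i))"
proof -
  have "(2 * pi * \<zeta>\<^sup>2) powr (- 1 / 2) = 1 / sqrt (2 * pi * \<zeta>\<^sup>2)"
    using powr_minus_divide[of "2 * pi * \<zeta>\<^sup>2" "1 / 2"] by (simp add: powr_half_sqrt)
  then show ?thesis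
    using assms by (simp add: prior_dens_def inv_gamma_dens_def normal_density_def)
qed

lemma inv_gamma_dens_nonneg: "0 < \<alpha> \<Longrightarrow> 0 \<le> inv_gamma_dens \<alpha> lam s"
  unfolding inv_gamma_dens_def using Gamma_real_pos[of \<alpha>] by simp

lemma inv_gamma_dens_ge:
  assumes "0 < \<alpha>" "0 < lam" "0 < u" "u \<le> s" "s \<le> v"
  shows "lam powr \<alpha> / Gamma \<alpha> * (1 / v) powr (\<alpha> + 1) * exp (- lam / u) \<le> inv_gamma_dens \<alpha> lam s"
proof -
  have "lam / s \<le> lam / u"
    using assms by (intro divide_left_mono) auto
  then show ?thesis
    unfolding inv_gamma_dens_def using assms Gamma_real_pos[of \<alpha>]
    by (intro mult_mono powr_mono2 divide_left_mono) auto
qed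

lemma normal_density_ge:
  assumes "\<bar>x - c\<bar> \<le> 1"
  shows "normal_density 0 \<zeta> 0 * exp (- (c\<^sup>2 + 1) / \<zeta>\<^sup>2) \<le> normal_density 0 \<zeta> x"
proof -
  have "x\<^sup>2 \<le> 2 * c\<^sup>2 + 2 * (x - c)\<^sup>2"
    using square_add_le[of c "x - c"] by simp
  also have "\<dots> \<le> 2 * (c\<^sup>2 + 1)"
    using power_mono[OF assms, of 2] by simp
  finally have "x\<^sup>2 / (2 * \<zeta>\<^sup>2) \<le> 2 * (c\<^sup>2 + 1) / (2 * \<zeta>\<^sup>2)"
    by (rule divide_right_mono) simp
  also have "\<dots> = (c\<^sup>2 + 1) / \<zeta>\<^sup>2"
    by (rule mult_divide_mult_cancel_left) simp
  finally have "- (c\<^sup>2 + 1) / \<zeta>\<^sup>2 \<le> - x\<^sup>2 / (2 * \<zeta>\<^sup>2)"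
    by (simp only: minus_divide_left[symmetric] neg_le_iff_le)
  then show ?thesis
    unfolding normal_density_def by (simp add: divide_right_mono)
qed

lemma prod_normal_density_ge:
  assumes "\<And>i. i < K \<Longrightarrow> \<bar>\<theta> i - c i\<bar> \<le> 1"
  shows "(normal_density 0 \<zeta> 0 * exp (- 1 / \<zeta>\<^sup>2)) ^ K * exp (- (\<Sum>i<K. (c i)\<^sup>2) / \<zeta>\<^sup>2)
    \<le> (\<Prod>i<K. normal_density 0 \<zeta> (\<theta> i))"
proof -
  have "(\<Prod>i<K. exp (- ((c i)\<^sup>2 + 1) / \<zeta>\<^sup>2))
      = (\<Prod>i<K. exp (- 1 / \<zeta>\<^sup>2) * exp (- (c i)\<^sup>2 / \<zeta>\<^sup>2))"
    by (intro prod.cong) (simp_all add: add_divide_distrib diff_divide_distrib flip: exp_add)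
  also have "\<dots> = exp (- 1 / \<zeta>\<^sup>2) ^ K * exp (\<Sum>i<K. - (c i)\<^sup>2 / \<zeta>\<^sup>2)"
    by (simp add: prod.distrib exp_sum)
  also have "(\<Sum>i<K. - (c i)\<^sup>2 / \<zeta>\<^sup>2) = - (\<Sum>i<K. (c i)\<^sup>2) / \<zeta>\<^sup>2"
    by (simp add: sum_negf sum_divide_distrib)
  finally have "(normal_density 0 \<zeta> 0 * exp (- 1 / \<zeta>\<^sup>2)) ^ K * exp (- (\<Sum>i<K. (c i)\<^sup>2) / \<zeta>\<^sup>2)
      = (\<Prod>i<K. normal_density 0 \<zeta> 0 * exp (- ((c i)\<^sup>2 + 1) / \<zeta>\<^sup>2))"
    by (simp add: prod.distrib power_mult_distrib)
  also have "\<dots> \<le> (\<Prod>i<K. normal_density 0 \<zeta> (\<theta> i))"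
    using assms normal_density_ge by (intro prod_mono) (auto simp: normal_density_nonneg)
  finally show ?thesis .
qed

lemma emeasure_param_space_box:
  assumes "0 \<le> e" "u \<le> v"
  shows "emeasure (param_space K) (PiE {..<K} (\<lambda>i. {c i - e..c i + e}) \<times> {u..v})
    = ennreal ((2 * e) ^ K * (v - u))"
proof -
  interpret product_sigma_finite "\<lambda>_::nat. lborel" ..
  have "emeasure (param_space K) (PiE {..<K} (\<lambda>i. {c i - e..c i + e}) \<times> {u..v})
      = emeasure (PiM {..<K} (\<lambda>_. lborel)) (PiE {..<K} (\<lambda>i. {c i - e..c i + e}))
        * emeasure lborel {u..v}"
    unfolding param_space_def
    by (rule lborel.emeasure_pair_measure_Times) (auto intro!: sets_PiM_I_finite)
  also have "\<dots> = (\<Prod>i<K. ennreal (2 * e)) * ennreal (v - u)"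
    using assms by (subst emeasure_PiM) auto
  also have "\<dots> = ennreal ((2 * e) ^ K) * ennreal (v - u)"
    using assms by (simp add: ennreal_power)
  finally show ?thesis
    using assms by (simp add: ennreal_mult)
qed

lemma nn_integral_indicator_ge:
  assumes "A \<in> sets M" "A \<subseteq> B" "\<And>x. x \<in> A \<Longrightarrow> c \<le> f x"
  shows "ennreal c * emeasure M A \<le> (\<integral>\<^sup>+x. indicator B x * ennreal (f x) \<partial>M)"
proof -
  have "ennreal c * emeasure M A = (\<integral>\<^sup>+x. ennreal c * indicator A x \<partial>M)"
    using assms(1) by (simp add: nn_integral_cmult_indicator)
  also have "\<dots> \<le> (\<integral>\<^sup>+x. indicator B x * ennreal (f x) \<partial>M)"
    using assms(2,3) by (intro nn_integral_mono) (auto simp: indicator_def intro: ennreal_leI)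
  finally show ?thesis .
qed

lemma prior_mass_KL_nbhd_ge:
  assumes f0: "f0 \<in> borel_measurable (cube p)" "integrable (cube p) (\<lambda>x. (f0 x)\<^sup>2)"
    and \<sigma>0: "\<sigma>0 > 0" and \<alpha>: "\<alpha> > 0" and lam: "lam > 0" and \<kappa>: "\<kappa> > 0"
    and c: "0 < c" "c \<le> 1" "c \<le> \<kappa> / 2" and N: "1 \<le> N" and \<eta>: "0 \<le> \<eta>" "\<eta> \<le> 1"
    and approx: "(\<integral>x. (fnet p k \<theta>' x - f0 x)\<^sup>2 \<partial>cube p) \<le> \<sigma>0\<^sup>2 * \<kappa> / 4 / N"
    and lip: "(\<eta> * fnet_lip p k \<theta>')\<^sup>2 \<le> \<sigma>0\<^sup>2 * \<kappa> / 4 / N"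
  shows "ennreal (lam powr \<alpha> / Gamma \<alpha> * (1 / (2 * \<sigma>0\<^sup>2)) powr (\<alpha> + 1) * exp (- lam / \<sigma>0\<^sup>2)
      * (2 * \<eta> * (normal_density 0 \<zeta> 0 * exp (- 1 / \<zeta>\<^sup>2))) ^ nparams p k
      * exp (- (\<Sum>i<nparams p k. (\<theta>' i)\<^sup>2) / \<zeta>\<^sup>2) * (\<sigma>0\<^sup>2 * (c / N)))
    \<le> (\<integral>\<^sup>+\<omega>. indicator (KL_nbhd p k f0 \<sigma>0 (\<kappa> / N)) \<omega> * ennreal (prior_dens \<alpha> lam \<zeta> (nparams p k) \<omega>)
         \<partial>param_space (nparams p k))"
proof -
  define K where "K = nparams p k"
  define t where "t = c / N"
  define box where
    "box = PiE {..<K} (\<lambda>i. {\<theta>' i - \<eta>..\<theta>' i + \<eta>}) \<times> {\<sigma>0\<^sup>2..\<sigma>0\<^sup>2 * (1 + t)}"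
  define lb where
    "lb = lam powr \<alpha> / Gamma \<alpha> * (1 / (2 * \<sigma>0\<^sup>2)) powr (\<alpha> + 1) * exp (- lam / \<sigma>0\<^sup>2)
      * ((normal_density 0 \<zeta> 0 * exp (- 1 / \<zeta>\<^sup>2)) ^ K * exp (- (\<Sum>i<K. (\<theta>' i)\<^sup>2) / \<zeta>\<^sup>2))"
  have \<sigma>0_sq: "0 < \<sigma>0\<^sup>2"
    using \<sigma>0 by simp
  have "c / N \<le> (\<kappa> / 2) / N"
    using c N by (intro divide_right_mono) auto
  then have t: "0 \<le> t" "t \<le> 1" "t \<le> \<kappa> / N / 2"
    using c N unfolding t_def by (auto simp: divide_le_eq_1)
  have mem_box: "(\<forall>i<K. \<bar>\<theta> i - \<theta>' i\<bar> \<le> \<eta>) \<and> \<sigma>0\<^sup>2 \<le> s \<and> s \<le> \<sigma>0\<^sup>2 * (1 + t)"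
    if "(\<theta>, s) \<in> box" for \<theta> s
    using that unfolding box_def by (force simp: PiE_iff abs_le_iff)
  have "box \<subseteq> KL_nbhd p k f0 \<sigma>0 (\<kappa> / N)"
  proof clarify
    fix \<theta> s
    assume "(\<theta>, s) \<in> box"
    then show "(\<theta>, s) \<in> KL_nbhd p k f0 \<sigma>0 (\<kappa> / N)"
      using mem_box[of \<theta> s] t approx lip \<kappa> N unfolding K_def
      by (intro mem_KL_nbhd_of_close[OF f0 \<sigma>0]) auto
  qed
  moreover have "lb \<le> prior_dens \<alpha> lam \<zeta> K \<omega>" if "\<omega> \<in> box" for \<omega>
  proof -
    obtain \<theta> s where \<omega>: "\<omega> = (\<theta>, s)" by fastforce
    have s: "\<sigma>0\<^sup>2 \<le> s" "s \<le> 2 * \<sigma>0\<^sup>2"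
      using mem_box[of \<theta> s] that t \<sigma>0_sq unfolding \<omega> by (auto intro: order_trans)
    show ?thesis
      unfolding lb_def \<omega> prior_dens_Pair[OF less_le_trans[OF \<sigma>0_sq s(1)]]
      using mem_box[of \<theta> s] that \<eta> \<alpha> lam \<sigma>0_sq s inv_gamma_dens_nonneg unfolding \<omega>
      by (intro mult_mono inv_gamma_dens_ge prod_normal_density_ge) auto
  qed
  moreover have "emeasure (param_space K) box = ennreal ((2 * \<eta>) ^ K * (\<sigma>0\<^sup>2 * t))"
    unfolding box_def using \<eta> t \<sigma>0_sq by (subst emeasure_param_space_box) (auto simp: algebra_simps)
  moreover have "box \<in> sets (param_space K)"
    unfolding box_def param_space_def by (intro pair_measureI sets_PiM_I_finite) auto
  moreover have "0 \<le> (2 * \<eta>) ^ K * (\<sigma>0\<^sup>2 * t)"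
    using \<eta> t by simp
  ultimately have "ennreal (lb * ((2 * \<eta>) ^ K * (\<sigma>0\<^sup>2 * t)))
      \<le> (\<integral>\<^sup>+\<omega>. indicator (KL_nbhd p k f0 \<sigma>0 (\<kappa> / N)) \<omega> * ennreal (prior_dens \<alpha> lam \<zeta> K \<omega>) \<partial>param_space K)"
    by (metis nn_integral_indicator_ge ennreal_mult'')
  then show ?thesis
    unfolding lb_def K_def t_def by (simp add: power_mult_distrib mult_ac)
qed

lemma nat_powr_bigo_powr: "b \<le> c \<Longrightarrow> (\<lambda>n. real n powr b) \<in> O(\<lambda>n. real n powr c)"
  using powr_bigo_iff[OF filterlim_real_sequentially] by simp

lemma square_smallo_powr:
  assumes f: "f \<in> o(\<lambda>n. real n powr - \<delta>)" and "0 \<le> \<delta>"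
  shows "(\<lambda>n. (f n)\<^sup>2) \<in> o(\<lambda>n. real n powr - \<delta>)"
proof -
  have "(\<lambda>n. (f n)\<^sup>2) \<in> o(\<lambda>n. (real n powr - \<delta>)\<^sup>2)"
    using landau_o.small_power[OF f, of 2] by simp
  also have "(\<lambda>n. (real n powr - \<delta>)\<^sup>2) = (\<lambda>n. real n powr (- \<delta> - \<delta>))"
    by (simp add: power2_eq_square flip: powr_add)
  also have "\<dots> \<in> O(\<lambda>n. real n powr - \<delta>)"
    using \<open>0 \<le> \<delta>\<close> by (intro nat_powr_bigo_powr) simp
  finally show ?thesis .
qed

lemma nparams_bigo:
  assumes "(\<lambda>n. real (k n)) \<in> O(\<lambda>n. real n powr a)" "0 < a"
  shows "(\<lambda>n. real (nparams p (k n))) \<in> O(\<lambda>n. real n powr a)"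
proof -
  have "(\<lambda>n. 1 + real (p + 2) * real (k n)) \<in> O(\<lambda>n. real n powr a)"
    using assms by (intro sum_in_bigo) (auto, real_asymp)
  then show ?thesis
    by (simp add: nparams_def algebra_simps)
qed

lemma eventually_exp_le_of_ln_smallo:
  fixes f g :: "'a \<Rightarrow> real"
  assumes "(\<lambda>x. ln (f x)) \<in> o[F](g)" "eventually (\<lambda>x. 0 < f x) F" "0 < c"
  shows "eventually (\<lambda>x. exp (- c * \<bar>g x\<bar>) \<le> f x) F"
  using landau_o.smallD[OF assms(1,3)] assms(2)
proof eventually_elim
  case (elim x)
  then have "- c * \<bar>g x\<bar> \<le> ln (f x)"
    by simp
  then show ?case
    using elim by (metis exp_le_cancel_iff exp_ln)
qed

lemma log_prior_mass_smallo:
  fixes K S :: "nat \<Rightarrow> real"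
  assumes K: "K \<in> O(\<lambda>n. real n powr a)" and S: "S \<in> o(\<lambda>n. real n powr (1 - \<delta>))"
    and a: "0 < a" "\<delta> < 1 - a" and "0 < b" "0 < d"
  shows "(\<lambda>n. A + K n * ln (b / real n ^ 2) + B * S n + ln (d / real n powr \<delta>))
    \<in> o(\<lambda>n. real n powr (1 - \<delta>))"
proof -
  have "\<delta> < 1"
    using a by simp
  have "(\<lambda>n. K n * ln (b / real n ^ 2)) \<in> O(\<lambda>n. real n powr a * ln (real n))"
    using \<open>0 < b\<close> by (intro landau_o.big.mult K) real_asymp
  also have "(\<lambda>n. real n powr a * ln (real n)) \<in> o(\<lambda>n. real n powr (1 - \<delta>))"
    using a by real_asymp
  finally have "(\<lambda>n. K n * ln (b / real n ^ 2)) \<in> o(\<lambda>n. real n powr (1 - \<delta>))" .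
  moreover have "(\<lambda>n. A) \<in> o(\<lambda>n. real n powr (1 - \<delta>))"
    using \<open>\<delta> < 1\<close> by real_asymp
  moreover have "(\<lambda>n. ln (d / real n powr \<delta>)) \<in> o(\<lambda>n. real n powr (1 - \<delta>))"
    using \<open>\<delta> < 1\<close> \<open>0 < d\<close> by real_asymp
  ultimately show ?thesis
    using S by (intro sum_in_smallo) simp_all
qed

lemma eventually_exp_le_prior_mass_bound:
  fixes K :: "nat \<Rightarrow> nat" and S :: "nat \<Rightarrow> real"
  assumes K: "(\<lambda>n. real (K n)) \<in> O(\<lambda>n. real n powr a)" and S: "S \<in> o(\<lambda>n. real n powr (1 - \<delta>))"
    and a: "0 < a" "\<delta> < 1 - a"
    and pos: "0 < C" "0 < b" "0 < s" "0 < c" "0 < \<kappa>'"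
  shows "\<forall>\<^sub>F n in sequentially. exp (- \<kappa>' * real n powr (1 - \<delta>))
    \<le> C * (2 * (1 / real n ^ 2) * b) ^ K n * exp (- S n / Z) * (s * (c / real n powr \<delta>))"
proof -
  define lb where
    "lb n = C * (2 * (1 / real n ^ 2) * b) ^ K n * exp (- S n / Z) * (s * (c / real n powr \<delta>))" for n
  have "\<forall>\<^sub>F n in sequentially. ln (lb n)
      = ln C + real (K n) * ln (2 * b / real n ^ 2) + (- 1 / Z) * S n + ln (s * c / real n powr \<delta>)"
    using eventually_gt_at_top[of 0]
    by eventually_elim (use pos in \<open>simp add: lb_def ln_mult ln_realpow ln_div\<close>)
  moreover have "(\<lambda>n. ln C + real (K n) * ln (2 * b / real n ^ 2) + (- 1 / Z) * S n
      + ln (s * c / real n powr \<delta>)) \<in> o(\<lambda>n. real n powr (1 - \<delta>))"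
    using K S a pos by (intro log_prior_mass_smallo) auto
  ultimately have "(\<lambda>n. ln (lb n)) \<in> o(\<lambda>n. real n powr (1 - \<delta>))"
    by (rule landau_o.small.in_cong[THEN iffD2])
  moreover have "\<forall>\<^sub>F n in sequentially. 0 < lb n"
    using eventually_gt_at_top[of 0] by eventually_elim (use pos in \<open>simp add: lb_def\<close>)
  ultimately have "\<forall>\<^sub>F n in sequentially. exp (- \<kappa>' * \<bar>real n powr (1 - \<delta>)\<bar>) \<le> lb n"
    using \<open>0 < \<kappa>'\<close> by (rule eventually_exp_le_of_ln_smallo)
  then show ?thesis
    unfolding lb_def by simp
qed

lemma eventually_integral_square_le:
  assumes "(\<lambda>n. L2norm p (g n)) \<in> o(\<lambda>n. real n powr - \<delta>)" "0 \<le> \<delta>" "0 < c"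
  shows "\<forall>\<^sub>F n in sequentially. (\<integral>x. (g n x)\<^sup>2 \<partial>cube p) \<le> c / real n powr \<delta>"
proof -
  have "(L2norm p (g n))\<^sup>2 = (\<integral>x. (g n x)\<^sup>2 \<partial>cube p)" for n
    unfolding L2norm_def by (simp add: Bochner_Integration.integral_nonneg)
  then show ?thesis
    using landau_o.smallD_nonneg_real[OF square_smallo_powr[OF assms(1,2)] _ \<open>0 < c\<close>]
    by (simp add: powr_minus_divide)
qed

lemma eventually_fnet_lip_le:
  fixes \<theta> :: "nat \<Rightarrow> nat \<Rightarrow> real"
  assumes k: "(\<lambda>n. real (k n)) \<in> O(\<lambda>n. real n powr a)"
    and S: "(\<lambda>n. \<Sum>i<nparams p (k n). (\<theta> n i)\<^sup>2) \<in> o(\<lambda>n. real n powr (1 - \<delta>))"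
    and "a \<le> 1" "0 \<le> \<delta>" "\<delta> < 1" "0 < c"
  shows "\<forall>\<^sub>F n in sequentially. (1 / real n ^ 2 * fnet_lip p (k n) (\<theta> n))\<^sup>2 \<le> c / real n powr \<delta>"
proof -
  define L where "L n = 1 + real (p + 2) * (real (k n) + (\<Sum>i<nparams p (k n). (\<theta> n i)\<^sup>2))" for n
  have "(\<lambda>n. real (k n)) \<in> O(\<lambda>n. real n powr 1)"
    using k nat_powr_bigo_powr[OF \<open>a \<le> 1\<close>] by (rule landau_o.big_trans)
  moreover have "(\<lambda>n. \<Sum>i<nparams p (k n). (\<theta> n i)\<^sup>2) \<in> O(\<lambda>n. real n powr 1)"
    using landau_o.small_imp_big[OF S] nat_powr_bigo_powr[of "1 - \<delta>" 1] \<open>0 \<le> \<delta>\<close>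
    by (auto intro: landau_o.big_trans)
  ultimately have "(\<lambda>n. real (k n) + (\<Sum>i<nparams p (k n). (\<theta> n i)\<^sup>2)) \<in> O(\<lambda>n. real n powr 1)"
    by (rule sum_in_bigo)
  moreover have "(\<lambda>n. 1) \<in> O(\<lambda>n. real n powr 1)"
    by real_asymp
  ultimately have "L \<in> O(\<lambda>n. real n powr 1)"
    unfolding L_def by (intro sum_in_bigo) simp_all
  then have "(\<lambda>n. (1 / real n ^ 2 * L n)\<^sup>2) \<in> O(\<lambda>n. (1 / real n ^ 2 * real n powr 1)\<^sup>2)"
    by (intro landau_o.big_power landau_o.big.mult) simp_all
  also have "(\<lambda>n. (1 / real n ^ 2 * real n powr 1)\<^sup>2) \<in> o(\<lambda>n. real n powr - \<delta>)"
    using \<open>\<delta> < 1\<close> by real_asymp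
  finally have "\<forall>\<^sub>F n in sequentially. (1 / real n ^ 2 * L n)\<^sup>2 \<le> c * \<bar>real n powr - \<delta>\<bar>"
    using \<open>0 < c\<close> by (intro landau_o.smallD_nonneg_real) simp_all
  then show ?thesis
  proof eventually_elim
    case (elim n)
    have "(1 / real n ^ 2 * fnet_lip p (k n) (\<theta> n))\<^sup>2 \<le> (1 / real n ^ 2 * L n)\<^sup>2"
      unfolding L_def using fnet_lip_le fnet_lip_nonneg
      by (intro power_mono mult_left_mono) simp_all
    then show ?case
      using elim by (simp add: powr_minus_divide)
  qed
qed

theorem proposition5:
  fixes p :: nat and f0 :: "(nat \<Rightarrow> real) \<Rightarrow> real"
    and \<sigma>0 \<alpha> lam \<zeta> a \<delta> :: real
    and k :: "nat \<Rightarrow> nat"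
    and \<theta>0 :: "nat \<Rightarrow> nat \<Rightarrow> real"
  assumes f0_meas: "f0 \<in> borel_measurable (cube p)"
    and f0_sq: "integrable (cube p) (\<lambda>x. (f0 x)\<^sup>2)"
    and \<sigma>0_pos: "\<sigma>0 > 0"
    and \<alpha>_pos: "\<alpha> > 0" and lam_pos: "lam > 0" and \<zeta>_pos: "\<zeta> > 0"
    and a_bounds: "0 < a" "a < 1"
    and k_asymp: "(\<lambda>n. real (k n)) \<sim>[at_top] (\<lambda>n. real n powr a)"
    and \<delta>_bounds: "0 \<le> \<delta>" "\<delta> < 1 - a"
    and A1: "(\<lambda>n. L2norm p (\<lambda>x. fnet p (k n) (\<theta>0 n) x - f0 x)) \<in> o(\<lambda>n. real n powr (- \<delta>))"
    and A2: "(\<lambda>n. \<Sum>i<nparams p (k n). (\<theta>0 n i)\<^sup>2) \<in> o(\<lambda>n. real n powr (1 - \<delta>))"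
  shows "\<forall>\<kappa> > 0. \<forall>\<kappa>' > 0. \<forall>\<^sub>F n in sequentially.
           ennreal (exp (- \<kappa>' * real n powr (1 - \<delta>)))
             \<le> (\<integral>\<^sup>+ \<omega>. indicator (KL_nbhd p (k n) f0 \<sigma>0 (\<kappa> / real n powr \<delta>)) \<omega>
                          * ennreal (prior_dens \<alpha> lam \<zeta> (nparams p (k n)) \<omega>)
                   \<partial>param_space (nparams p (k n)))"
proof (intro allI impI)
  fix \<kappa> \<kappa>' :: real
  assume \<kappa>: "\<kappa> > 0" and \<kappa>': "\<kappa>' > 0"
  have k: "(\<lambda>n. real (k n)) \<in> O(\<lambda>n. real n powr a)"
    using asymp_equiv_imp_bigo[OF k_asymp] .
  have pos: "0 < lam powr \<alpha> / Gamma \<alpha> * (1 / (2 * \<sigma>0\<^sup>2)) powr (\<alpha> + 1) * exp (- lam / \<sigma>0\<^sup>2)"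
    "0 < normal_density 0 \<zeta> 0 * exp (- 1 / \<zeta>\<^sup>2)" "0 < \<sigma>0\<^sup>2" "0 < min 1 (\<kappa> / 2)" "0 < \<sigma>0\<^sup>2 * \<kappa> / 4"
    using \<alpha>_pos lam_pos \<sigma>0_pos \<zeta>_pos \<kappa> Gamma_real_pos[of \<alpha>] by (auto simp: normal_density_def)
  have "a \<le> 1" "\<delta> < 1"
    using a_bounds \<delta>_bounds by simp_all
  note mass = eventually_exp_le_prior_mass_bound[OF nparams_bigo[OF k a_bounds(1), where p = p] A2
      a_bounds(1) \<delta>_bounds(2) pos(1,2,3,4) \<kappa>', where Z = "\<zeta>\<^sup>2"]
  note approx = eventually_integral_square_le[OF A1 \<delta>_bounds(1) pos(5)]
  note lip = eventually_fnet_lip_le[OF k A2 \<open>a \<le> 1\<close> \<delta>_bounds(1) \<open>\<delta> < 1\<close> pos(5)]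
  show "\<forall>\<^sub>F n in sequentially. ennreal (exp (- \<kappa>' * real n powr (1 - \<delta>)))
      \<le> (\<integral>\<^sup>+ \<omega>. indicator (KL_nbhd p (k n) f0 \<sigma>0 (\<kappa> / real n powr \<delta>)) \<omega>
             * ennreal (prior_dens \<alpha> lam \<zeta> (nparams p (k n)) \<omega>) \<partial>param_space (nparams p (k n)))"
    using mass approx lip eventually_ge_at_top[of 1]
  proof eventually_elim
    case (elim n)
    then have "1 \<le> real n powr \<delta>" and "1 / real n ^ 2 \<le> 1"
      using \<delta>_bounds by (auto simp: ge_one_powr_ge_zero)
    with elim \<kappa> show ?case
      by (intro order_trans[OF ennreal_leI[OF elim(1)]] prior_mass_KL_nbhd_ge
          f0_meas f0_sq \<sigma>0_pos \<alpha>_pos lam_pos) auto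
  qed
qed

end
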